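(* Suppose treatment assignment is ignorable given covariates $\mathbf{x}$ with aliasing by the function $\beta(\mathbf{x},\mathbf{w})$. Let $\mathbf{e}(\mathbf{x})=(\Pr(Z_1=1\mid\mathbf{x}),\ldots,\Pr(Z_G=1\mid\mathbf{x}))$ and let $\mathbf{f}(\cdot)$ be any (measurable) function. Then (a) $\mathbf{Z}$ is conditionally independent of $\{r_1-\beta(\mathbf{x},\mathbf{w}_1),\ldots,r_G-\beta(\mathbf{x},\mathbf{w}_G)\}$ given $\{\mathbf{e}(\mathbf{x}),\mathbf{f}(\mathbf{x})\}$; (b) $0<\Pr\{Z_g=1\mid \mathbf{e}(\mathbf{x}),\mathbf{f}(\mathbf{x})\}<1$ for $g=1,\ldots,G$; (c) if in addition the contrast $h_1,\ldots,h_G$ (constants with $\sum_g h_g=0$, not all zero) is not aliased with $\beta(\mathbf{x},\mathbf{w})$, then $$\mathrm{E}\Big\{\sum_{g=1}^G h_g r_g\,\Big|\,\mathbf{e}(\mathbf{x}),\mathbf{f}(\mathbf{x})\Big\}=\sum_{g=1}^G h_g\,\mathrm{E}\big\{R\,\big|\,Z_g=1,\mathbf{e}(\mathbf{x}),\mathbf{f}(\mathbf{x})\big\}.$$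
   Context: There are $G$ treatment groups. Each individual has a random vector $\mathbf{Z}=(Z_1,\ldots,Z_G)$ with $Z_g\in\{0,1\}$ and $\sum_{g=1}^G Z_g=1$. Each individual has observed covariates $\mathbf{x}$ and observed "eligibility" covariates $\mathbf{w}$; there are fixed distinct values $\mathbf{w}_1,\ldots,\mathbf{w}_G$ such that $Z_g=1$ if and only if $\mathbf{w}=\mathbf{w}_g$. Each individual has potential responses $r_1,\ldots,r_G$, and the observed response is $R=\sum_{g=1}^G Z_g r_g$. All expectations are assumed to exist. Definition (ignorable with aliasing): treatment assignment is ignorable given $\mathbf{x}$ with aliasing by a function $\beta(\mathbf{x},\mathbf{w})$ if (i) $\mathbf{Z}$ is conditionally independent of $\{r_1-\beta(\mathbf{x},\mathbf{w}_1),\ldots,r_G-\beta(\mathbf{x},\mathbf{w}_G)\}$ given $\mathbf{x}$, and (ii) $0<\Pr(Z_g=1\mid\mathbf{x})<1$ for $g=1,\ldots,G$. Definition (not aliased): a contrast $h_1,\ldots,h_G$ is not aliased with $\beta(\mathbf{x},\mathbf{w})$ if $\sum_{g=1}^G h_g\,\beta(\mathbf{x},\mathbf{w}_g)=0$ for all $\mathbf{x}$. *)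

theory Defs
  imports "HOL-Probability.Probability"
begin

definition cond_indep_given ::
  "'a measure \<Rightarrow> 'a measure \<Rightarrow> 'a measure \<Rightarrow> 'a measure \<Rightarrow> bool" where
  "cond_indep_given M A B F \<longleftrightarrow>
     (\<forall>S\<in>sets A. \<forall>T\<in>sets B. AE \<omega> in M.
        real_cond_exp M F (indicator (S \<inter> T)) \<omega>
          = real_cond_exp M F (indicator S) \<omega> * real_cond_exp M F (indicator T) \<omega>)"

definition cond_prob :: "'a measure \<Rightarrow> 'a measure \<Rightarrow> 'a set \<Rightarrow> 'a \<Rightarrow> real" where
  "cond_prob M F A = real_cond_exp M F (indicator A)"

definition cond_exp_event ::
  "'a measure \<Rightarrow> 'a measure \<Rightarrow> 'a set \<Rightarrow> ('a \<Rightarrow> real) \<Rightarrow> 'a \<Rightarrow> real" where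
  "cond_exp_event M F A X =
     (\<lambda>\<omega>. real_cond_exp M F (\<lambda>\<eta>. indicator A \<eta> * X \<eta>) \<omega> / cond_prob M F A \<omega>)"

definition gen_vec :: "'a measure \<Rightarrow> nat \<Rightarrow> (nat \<Rightarrow> 'a \<Rightarrow> real) \<Rightarrow> 'a measure" where
  "gen_vec M G V = vimage_algebra (space M) (\<lambda>\<omega>. restrict (\<lambda>g. V g \<omega>) {1..G})
                                  (PiM {1..G} (\<lambda>_. borel))"

text \<open>Ignorability given x with aliasing by beta (groups are indexed 1..G).
  Z g is the 0/1 indicator Z_g, r g is the potential response r_g, wg g is w_g.\<close>
definition ignorable_alias ::
  "'a measure \<Rightarrow> nat \<Rightarrow> 'x measure \<Rightarrow> ('a \<Rightarrow> 'x) \<Rightarrow> (nat \<Rightarrow> 'a \<Rightarrow> real)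
    \<Rightarrow> (nat \<Rightarrow> 'a \<Rightarrow> real) \<Rightarrow> ('x \<Rightarrow> 'w \<Rightarrow> real) \<Rightarrow> (nat \<Rightarrow> 'w) \<Rightarrow> bool" where
  "ignorable_alias M G X x Z r \<beta> wg \<longleftrightarrow>
     cond_indep_given M (gen_vec M G Z) (gen_vec M G (\<lambda>g \<omega>. r g \<omega> - \<beta> (x \<omega>) (wg g)))
       (vimage_algebra (space M) x X)
   \<and> (\<forall>g\<in>{1..G}. AE \<omega> in M.
        0 < cond_prob M (vimage_algebra (space M) x X) {\<eta>\<in>space M. Z g \<eta> = 1} \<omega>
      \<and> cond_prob M (vimage_algebra (space M) x X) {\<eta>\<in>space M. Z g \<eta> = 1} \<omega> < 1)"

definition not_aliased :: "nat \<Rightarrow> 'x measure \<Rightarrow> (nat \<Rightarrow> real) \<Rightarrow> ('x \<Rightarrow> 'w \<Rightarrow> real) \<Rightarrow> (nat \<Rightarrow> 'w) \<Rightarrow> bool" where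
  "not_aliased G X h \<beta> wg \<longleftrightarrow> (\<forall>\<xi>\<in>space X. (\<Sum>g\<in>{1..G}. h g * \<beta> \<xi> (wg g)) = 0)"

end

theory Submission
  imports Defs
begin

text \<open>
  Conditioning on the propensity score and \<open>f(x)\<close> means conditioning on a coarser
  sigma-algebra than that of \<open>x\<close>. Since \<open>Z\<close> is a one-hot vector, every event generated by
  \<open>Z\<close> is a finite union of the events \<open>Z\<^sub>g = 1\<close>, so its conditional probability given
  \<open>x\<close> is a sum of propensity scores and hence already measurable with respect to the coarser
  sigma-algebra. By the tower property, every product rule \<open>E(U | x) = q E(V | x)\<close> with
  such a factor \<open>q\<close> descends to the coarser sigma-algebra; this gives (a) and (b).
  For (c), conditional independence extends from indicators to the integrable function
  \<open>r\<^sub>g - \<beta>(x, w\<^sub>g)\<close> of the adjusted responses, and \<open>\<beta>(x, w\<^sub>g)\<close> is a function of \<open>x\<close>, so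
  \<open>E(1{Z\<^sub>g = 1} r\<^sub>g | x) = e\<^sub>g(x) E(r\<^sub>g | x)\<close>. Passing to the coarser sigma-algebra and dividing
  by \<open>e\<^sub>g(x) > 0\<close> yields \<open>E(R | Z\<^sub>g = 1, e(x), f(x)) = E(r\<^sub>g | e(x), f(x))\<close> for every \<open>g\<close>,
  and (c) follows by linearity. Because \<open>\<beta>\<close> enters only through the fixed values \<open>w\<^sub>g\<close>,
  neither the contrast conditions nor the eligibility covariates are needed.
\<close>

section \<open>Sub-sigma-algebras and weighted image measures\<close>

lemma subalgebra_vimage_algebra:
  assumes "f \<in> measurable M N"
  shows "subalgebra M (vimage_algebra (space M) f N)"
  unfolding subalgebra_def using sets_image_in_sets[OF refl assms] by simp

lemma subalgebra_vimage_algebra_comp: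
  assumes f: "f \<in> \<Omega> \<rightarrow> space N" and g: "g \<in> measurable N K"
  shows "subalgebra (vimage_algebra \<Omega> f N) (vimage_algebra \<Omega> (\<lambda>\<omega>. g (f \<omega>)) K)"
proof -
  have "(\<lambda>\<omega>. g (f \<omega>)) \<in> measurable (vimage_algebra \<Omega> f N) K"
    using measurable_comp[OF measurable_vimage_algebra1[OF f] g] by (simp add: o_def)
  then show ?thesis
    unfolding subalgebra_def using sets_image_in_sets[of "vimage_algebra \<Omega> f N"] by auto
qed

lemma integral_weight_comp_eqI:
  fixes w1 w2 :: "'a \<Rightarrow> real" and \<psi> :: "'b \<Rightarrow> real"
  assumes [measurable]: "\<Phi> \<in> measurable M N" "w1 \<in> borel_measurable M" "w2 \<in> borel_measurable M"
      "\<psi> \<in> borel_measurable N"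
    and nonneg: "AE \<omega> in M. 0 \<le> w1 \<omega>" "AE \<omega> in M. 0 \<le> w2 \<omega>"
    and int: "\<And>T. T \<in> sets N \<Longrightarrow> integrable M (\<lambda>\<omega>. w1 \<omega> * indicator (\<Phi> -` T \<inter> space M) \<omega>)"
      "\<And>T. T \<in> sets N \<Longrightarrow> integrable M (\<lambda>\<omega>. w2 \<omega> * indicator (\<Phi> -` T \<inter> space M) \<omega>)"
    and eq: "\<And>T. T \<in> sets N \<Longrightarrow> (\<integral>\<omega>. w1 \<omega> * indicator (\<Phi> -` T \<inter> space M) \<omega> \<partial>M)
                                 = (\<integral>\<omega>. w2 \<omega> * indicator (\<Phi> -` T \<inter> space M) \<omega> \<partial>M)"
  shows "(\<integral>\<omega>. w1 \<omega> * \<psi> (\<Phi> \<omega>) \<partial>M) = (\<integral>\<omega>. w2 \<omega> * \<psi> (\<Phi> \<omega>) \<partial>M)"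
proof -
  have emeasure_image: "emeasure (distr (density M w) N \<Phi>) T
      = ennreal (\<integral>\<omega>. w \<omega> * indicator (\<Phi> -` T \<inter> space M) \<omega> \<partial>M)"
    if [measurable]: "w \<in> borel_measurable M" and "AE \<omega> in M. 0 \<le> w \<omega>"
      and "integrable M (\<lambda>\<omega>. w \<omega> * indicator (\<Phi> -` T \<inter> space M) \<omega>)" and [measurable]: "T \<in> sets N"
    for w T
  proof -
    have "emeasure (distr (density M w) N \<Phi>) T = (\<integral>\<^sup>+ \<omega>. ennreal (w \<omega>) * indicator (\<Phi> -` T \<inter> space M) \<omega> \<partial>M)"
      by (simp add: emeasure_distr emeasure_density)
    also have "\<dots> = (\<integral>\<^sup>+ \<omega>. ennreal (w \<omega> * indicator (\<Phi> -` T \<inter> space M) \<omega>) \<partial>M)"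
      by (rule nn_integral_cong) (auto simp: indicator_def)
    also have "\<dots> = ennreal (\<integral>\<omega>. w \<omega> * indicator (\<Phi> -` T \<inter> space M) \<omega> \<partial>M)"
      using that by (intro nn_integral_eq_integral) (auto simp: indicator_def)
    finally show ?thesis .
  qed
  have "distr (density M w1) N \<Phi> = distr (density M w2) N \<Phi>"
    by (rule measure_eqI) (simp_all add: emeasure_image nonneg int eq)
  then have "(\<integral>\<omega>. \<psi> (\<Phi> \<omega>) \<partial>density M w1) = (\<integral>\<omega>. \<psi> (\<Phi> \<omega>) \<partial>density M w2)"
    by (metis integral_distr measurable_density_eq1 assms(1,4))
  then show ?thesis
    using nonneg by (simp add: integral_density)
qed

lemma sets_gen_vec_subset:
  assumes "\<And>g. g \<in> {1..G} \<Longrightarrow> V g \<in> borel_measurable M"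
  shows "sets (gen_vec M G V) \<subseteq> sets M"
  unfolding gen_vec_def using assms by (intro sets_image_in_sets) measurable

section \<open>One-hot assignment vectors\<close>

lemma one_hot_eq_delta:
  fixes z :: "'i \<Rightarrow> real"
  assumes "finite I" and z01: "\<And>i. i \<in> I \<Longrightarrow> z i \<in> {0, 1}" and sum: "(\<Sum>i\<in>I. z i) = 1"
  shows "\<exists>i\<in>I. \<forall>j\<in>I. z j = (if j = i then 1 else 0)"
proof -
  obtain i where i: "i \<in> I" "z i = 1"
  proof -
    have "\<exists>i\<in>I. z i = 1"
    proof (rule ccontr)
      assume "\<not> (\<exists>i\<in>I. z i = 1)"
      then have "(\<Sum>i\<in>I. z i) = 0"
        using z01 by (intro sum.neutral) force
      with sum show False by simp
    qed
    with that show thesis by blast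
  qed
  have "z j = 0" if "j \<in> I" "j \<noteq> i" for j
  proof -
    have "(\<Sum>k\<in>{i, j}. z k) \<le> (\<Sum>k\<in>I. z k)"
    proof (rule sum_mono2[OF \<open>finite I\<close>])
      show "{i, j} \<subseteq> I"
        using i that by simp
      show "0 \<le> z k" if "k \<in> I - {i, j}" for k
        using z01[of k] that by auto
    qed
    then show ?thesis
      using z01[OF \<open>j \<in> I\<close>] i that sum by auto
  qed
  with i show ?thesis
    by auto
qed

lemma indicator_gen_vec_one_hot:
  fixes Z :: "nat \<Rightarrow> 'a \<Rightarrow> real"
  assumes Z01: "\<And>g \<omega>. g \<in> {1..G} \<Longrightarrow> \<omega> \<in> space M \<Longrightarrow> Z g \<omega> \<in> {0, 1}"
    and Z_sum: "\<And>\<omega>. \<omega> \<in> space M \<Longrightarrow> (\<Sum>g\<in>{1..G}. Z g \<omega>) = 1"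
    and S: "S \<in> sets (gen_vec M G Z)"
  obtains J where "J \<subseteq> {1..G}"
    and "\<And>\<omega>. \<omega> \<in> space M \<Longrightarrow> indicator S \<omega> = (\<Sum>g\<in>J. indicator {\<eta>\<in>space M. Z g \<eta> = 1} \<omega> :: real)"
proof -
  define Zv where "Zv = (\<lambda>\<omega>. restrict (\<lambda>g. Z g \<omega>) {1..G})"
  define \<delta> where "\<delta> = (\<lambda>g0. restrict (\<lambda>g. if g = g0 then 1 else 0 :: real) {1..G})"
  have Zv: "Zv \<in> space M \<rightarrow> space (PiM {1..G} (\<lambda>_. borel :: real measure))"
    by (auto simp: Zv_def space_PiM)
  have "S \<in> sets (vimage_algebra (space M) Zv (PiM {1..G} (\<lambda>_. borel)))"
    using S by (simp add: gen_vec_def Zv_def)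
  then obtain C where S_eq: "S = Zv -` C \<inter> space M"
    unfolding sets_vimage_algebra2[OF Zv] by blast
  define J where "J = {g \<in> {1..G}. \<delta> g \<in> C}"
  have J: "J \<subseteq> {1..G}" "finite J"
    by (auto simp: J_def)
  have "indicator S \<omega> = (\<Sum>g\<in>J. indicator {\<eta>\<in>space M. Z g \<eta> = 1} \<omega> :: real)" if \<omega>: "\<omega> \<in> space M" for \<omega>
  proof -
    obtain g0 where g0: "g0 \<in> {1..G}" and delta: "\<forall>g\<in>{1..G}. Z g \<omega> = (if g = g0 then 1 else 0)"
      using one_hot_eq_delta[of "{1..G}" "\<lambda>g. Z g \<omega>"] Z01 Z_sum \<omega> by auto
    then have "Zv \<omega> = \<delta> g0"
      unfolding Zv_def \<delta>_def by (intro restrict_ext) simp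
    then have "indicator S \<omega> = (if g0 \<in> J then 1 else 0 :: real)"
      using \<omega> g0 by (simp add: S_eq J_def indicator_def)
    also have "\<dots> = (\<Sum>g\<in>J. if g = g0 then 1 else 0)"
      using J by simp
    also have "\<dots> = (\<Sum>g\<in>J. indicator {\<eta>\<in>space M. Z g \<eta> = 1} \<omega>)"
      using J delta \<omega> by (intro sum.cong) (auto simp: indicator_def subset_iff)
    finally show ?thesis .
  qed
  with J show ?thesis
    using that by blast
qed

section \<open>Conditional expectations on nested sub-sigma-algebras\<close>

context finite_measure
begin

lemma integrable_indicator_real: "A \<in> sets M \<Longrightarrow> integrable M (indicator A :: 'a \<Rightarrow> real)"
  by (simp add: less_top[symmetric])

lemma integrable_indicator_cond_exp_indicator_mult:
  assumes H: "subalgebra M H" and "A \<in> sets M" "B \<in> sets M" and u: "integrable M u"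
  shows "integrable M (\<lambda>\<omega>. indicator B \<omega> * real_cond_exp M H (indicator A) \<omega> * u \<omega>)"
proof -
  interpret H: finite_measure_subalgebra M H by unfold_locales (rule H)
  have "AE \<omega> in M. 0 \<le> real_cond_exp M H (indicator A) \<omega>" "AE \<omega> in M. real_cond_exp M H (indicator A) \<omega> \<le> 1"
    using assms by (auto intro!: H.real_cond_exp_ge_c H.real_cond_exp_le_c integrable_indicator_real)
  with assms show ?thesis
    by (intro Bochner_Integration.integrable_bound[OF u])
      (auto simp: abs_mult indicator_def intro!: mult_left_le_one_le)
qed

lemma integral_indicator_mult_comp_cond_indep:
  fixes \<psi> :: "'b \<Rightarrow> real"
  assumes H: "subalgebra M H" and [measurable]: "A \<in> sets M" "B \<in> sets H"
    "\<Phi> \<in> measurable M N" "\<psi> \<in> borel_measurable N"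
    and indep: "\<And>T. T \<in> sets N \<Longrightarrow> AE \<omega> in M.
      real_cond_exp M H (indicator (A \<inter> (\<Phi> -` T \<inter> space M))) \<omega>
        = real_cond_exp M H (indicator A) \<omega> * real_cond_exp M H (indicator (\<Phi> -` T \<inter> space M)) \<omega>"
  shows "(\<integral>\<omega>. indicator B \<omega> * indicator A \<omega> * \<psi> (\<Phi> \<omega>) \<partial>M)
    = (\<integral>\<omega>. indicator B \<omega> * real_cond_exp M H (indicator A) \<omega> * \<psi> (\<Phi> \<omega>) \<partial>M)"
proof (rule integral_weight_comp_eqI[where N = N])
  interpret H: finite_measure_subalgebra M H by unfold_locales (rule H)
  let ?p = "real_cond_exp M H (indicator A)"
  have [measurable]: "B \<in> sets M"
    using H by (auto simp: subalgebra_def)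
  show "AE \<omega> in M. 0 \<le> indicator B \<omega> * (indicator A \<omega> :: real)"
    by simp
  show "AE \<omega> in M. 0 \<le> indicator B \<omega> * ?p \<omega>"
    by (rule AE_mp[OF H.real_cond_exp_ge_c[of "indicator A" 0]]) (auto intro: integrable_indicator_real)
  show "\<Phi> \<in> measurable M N" "\<psi> \<in> borel_measurable N"
    "(\<lambda>\<omega>. indicator B \<omega> * indicator A \<omega> :: real) \<in> borel_measurable M"
    "(\<lambda>\<omega>. indicator B \<omega> * ?p \<omega>) \<in> borel_measurable M"
    by measurable
  fix T assume T[measurable]: "T \<in> sets N"
  define C where "C = \<Phi> -` T \<inter> space M"
  have [measurable]: "C \<in> sets M"
    unfolding C_def by measurable
  have "(\<integral>\<omega>. indicator B \<omega> * indicator A \<omega> * indicator C \<omega> \<partial>M)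
      = (\<integral>\<omega>. indicator B \<omega> * real_cond_exp M H (indicator (A \<inter> C)) \<omega> \<partial>M)"
  proof (subst H.real_cond_exp_intg(2))
    have "(\<lambda>\<omega>. indicator B \<omega> * indicator (A \<inter> C) \<omega>) = (indicator (B \<inter> A \<inter> C) :: 'a \<Rightarrow> real)"
      by (auto simp: indicator_def)
    then show "integrable M (\<lambda>\<omega>. indicator B \<omega> * indicator (A \<inter> C) \<omega> :: real)"
      using integrable_indicator_real[of "B \<inter> A \<inter> C"] by simp
  qed (auto simp: indicator_inter_arith mult.assoc)
  also have "\<dots> = (\<integral>\<omega>. (indicator B \<omega> * ?p \<omega>) * real_cond_exp M H (indicator C) \<omega> \<partial>M)"
    by (rule integral_cong_AE) (use indep[OF T] in \<open>auto simp: C_def\<close>)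
  also have "\<dots> = (\<integral>\<omega>. (indicator B \<omega> * ?p \<omega>) * indicator C \<omega> \<partial>M)"
    using H
    by (intro H.real_cond_exp_intg(2)) (auto intro!: integrable_indicator_cond_exp_indicator_mult integrable_indicator_real)
  finally show "(\<integral>\<omega>. indicator B \<omega> * indicator A \<omega> * indicator (\<Phi> -` T \<inter> space M) \<omega> \<partial>M)
      = (\<integral>\<omega>. indicator B \<omega> * ?p \<omega> * indicator (\<Phi> -` T \<inter> space M) \<omega> \<partial>M)"
    unfolding C_def .
  show "integrable M (\<lambda>\<omega>. indicator B \<omega> * indicator A \<omega> * indicator (\<Phi> -` T \<inter> space M) \<omega> :: real)"
    using integrable_indicator_real[of "B \<inter> A \<inter> \<Phi> -` T \<inter> space M"]
    by (simp add: indicator_inter_arith[symmetric] Int_assoc)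
  show "integrable M (\<lambda>\<omega>. indicator B \<omega> * ?p \<omega> * indicator (\<Phi> -` T \<inter> space M) \<omega>)"
    using H
    by (intro integrable_indicator_cond_exp_indicator_mult integrable_indicator_real) auto
qed

lemma real_cond_exp_indicator_mult_comp:
  fixes \<psi> :: "'b \<Rightarrow> real"
  assumes H: "subalgebra M H" and [measurable]: "A \<in> sets M" "\<Phi> \<in> measurable M N" "\<psi> \<in> borel_measurable N"
    and int: "integrable M (\<lambda>\<omega>. \<psi> (\<Phi> \<omega>))"
    and indep: "\<And>T. T \<in> sets N \<Longrightarrow> AE \<omega> in M.
      real_cond_exp M H (indicator (A \<inter> (\<Phi> -` T \<inter> space M))) \<omega>
        = real_cond_exp M H (indicator A) \<omega> * real_cond_exp M H (indicator (\<Phi> -` T \<inter> space M)) \<omega>"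
  shows "AE \<omega> in M. real_cond_exp M H (\<lambda>\<eta>. indicator A \<eta> * \<psi> (\<Phi> \<eta>)) \<omega>
      = real_cond_exp M H (indicator A) \<omega> * real_cond_exp M H (\<lambda>\<eta>. \<psi> (\<Phi> \<eta>)) \<omega>"
proof -
  interpret H: finite_measure_subalgebra M H by unfold_locales (rule H)
  let ?p = "real_cond_exp M H (indicator A)"
  show ?thesis
  proof (rule H.real_cond_exp_charact)
    fix B assume [measurable]: "B \<in> sets H"
    then have [measurable]: "B \<in> sets M"
      using H by (auto simp: subalgebra_def)
    have "(\<integral>\<omega>. indicator B \<omega> * indicator A \<omega> * \<psi> (\<Phi> \<omega>) \<partial>M) = (\<integral>\<omega>. indicator B \<omega> * ?p \<omega> * \<psi> (\<Phi> \<omega>) \<partial>M)"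
      by (rule integral_indicator_mult_comp_cond_indep[OF H _ _ _ _ indep]) measurable
    also have "\<dots> = (\<integral>\<omega>. (indicator B \<omega> * ?p \<omega>) * real_cond_exp M H (\<lambda>\<eta>. \<psi> (\<Phi> \<eta>)) \<omega> \<partial>M)"
      using H by (intro H.real_cond_exp_intg(2)[symmetric] integrable_indicator_cond_exp_indicator_mult int) auto
    finally show "(\<integral>\<omega>\<in>B. indicator A \<omega> * \<psi> (\<Phi> \<omega>) \<partial>M)
        = (\<integral>\<omega>\<in>B. ?p \<omega> * real_cond_exp M H (\<lambda>\<eta>. \<psi> (\<Phi> \<eta>)) \<omega> \<partial>M)"
      by (simp add: set_lebesgue_integral_def mult.assoc)
  next
    show "integrable M (\<lambda>\<eta>. indicator A \<eta> * \<psi> (\<Phi> \<eta>))"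
      using integrable_mult_indicator[OF _ int] by simp
    show "integrable M (\<lambda>\<omega>. ?p \<omega> * real_cond_exp M H (\<lambda>\<eta>. \<psi> (\<Phi> \<eta>)) \<omega>)"
      using integrable_indicator_cond_exp_indicator_mult[where A = A and B = "space M",
          OF H _ sets.top H.real_cond_exp_int(1)[OF int]]
      by (rule Bochner_Integration.integrable_cong[THEN iffD1, OF refl, rotated]) auto
  qed measurable
qed

lemma real_cond_exp_mult_nested_subalg:
  assumes H: "subalgebra M H" and F: "subalgebra H F"
    and [measurable]: "q \<in> borel_measurable F" and u: "integrable M u" and v: "integrable M v"
    and eq: "AE \<omega> in M. real_cond_exp M H u \<omega> = q \<omega> * real_cond_exp M H v \<omega>"
  shows "AE \<omega> in M. real_cond_exp M F u \<omega> = q \<omega> * real_cond_exp M F v \<omega>"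
proof -
  have MF: "subalgebra M F"
    using H F by (auto simp: subalgebra_def)
  interpret H: finite_measure_subalgebra M H by unfold_locales (rule H)
  interpret F: finite_measure_subalgebra M F by unfold_locales (rule MF)
  have [measurable]: "q \<in> borel_measurable M"
    by (rule measurable_from_subalg[OF MF]) measurable
  have "integrable M (\<lambda>\<omega>. q \<omega> * real_cond_exp M H v \<omega>)"
    by (rule integrable_cong_AE_imp[OF H.real_cond_exp_int(1)[OF u]]) (use eq in auto)
  have "AE \<omega> in M. real_cond_exp M F u \<omega> = real_cond_exp M F (real_cond_exp M H u) \<omega>"
    using F.real_cond_exp_nested_subalg[OF H F u] by auto
  moreover have "AE \<omega> in M. real_cond_exp M F (real_cond_exp M H u) \<omega>
      = real_cond_exp M F (\<lambda>\<omega>. q \<omega> * real_cond_exp M H v \<omega>) \<omega>"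
    by (rule F.real_cond_exp_cong) (use eq in auto)
  moreover have "AE \<omega> in M. real_cond_exp M F (\<lambda>\<omega>. q \<omega> * real_cond_exp M H v \<omega>) \<omega>
      = q \<omega> * real_cond_exp M F (real_cond_exp M H v) \<omega>"
    by (rule F.real_cond_exp_mult) (auto intro: \<open>integrable M (\<lambda>\<omega>. q \<omega> * real_cond_exp M H v \<omega>)\<close>)
  moreover have "AE \<omega> in M. real_cond_exp M F (real_cond_exp M H v) \<omega> = real_cond_exp M F v \<omega>"
    by (rule F.real_cond_exp_nested_subalg[OF H F v])
  ultimately show ?thesis
    by eventually_elim auto
qed

lemma real_cond_exp_nested_subalg_eq:
  assumes H: "subalgebra M H" and F: "subalgebra H F"
    and q: "q \<in> borel_measurable F" and u: "integrable M u"
    and eq: "AE \<omega> in M. real_cond_exp M H u \<omega> = q \<omega>"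
  shows "AE \<omega> in M. real_cond_exp M F u \<omega> = q \<omega>"
proof -
  interpret H: finite_measure_subalgebra M H by unfold_locales (rule H)
  interpret F: finite_measure_subalgebra M F
    by unfold_locales (use H F in \<open>auto simp: subalgebra_def\<close>)
  have H_one: "AE \<omega> in M. real_cond_exp M H (\<lambda>_. 1) \<omega> = 1"
    by (rule H.real_cond_exp_F_meas) auto
  have F_one: "AE \<omega> in M. real_cond_exp M F (\<lambda>_. 1) \<omega> = 1"
    by (rule F.real_cond_exp_F_meas) auto
  have "AE \<omega> in M. real_cond_exp M H u \<omega> = q \<omega> * real_cond_exp M H (\<lambda>_. 1) \<omega>"
    using eq H_one by eventually_elim auto
  from real_cond_exp_mult_nested_subalg[OF H F q u integrable_const this]
  show ?thesis
    using F_one by eventually_elim auto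
qed

lemma real_cond_exp_indicator_mult_add_measurable:
  assumes H: "subalgebra M H" and [measurable]: "A \<in> sets M"
    and u: "integrable M u" and b: "integrable M b" and [measurable]: "b \<in> borel_measurable H"
    and eq: "AE \<omega> in M. real_cond_exp M H (\<lambda>\<eta>. indicator A \<eta> * u \<eta>) \<omega>
      = real_cond_exp M H (indicator A) \<omega> * real_cond_exp M H u \<omega>"
  shows "AE \<omega> in M. real_cond_exp M H (\<lambda>\<eta>. indicator A \<eta> * (u \<eta> + b \<eta>)) \<omega>
      = real_cond_exp M H (indicator A) \<omega> * real_cond_exp M H (\<lambda>\<eta>. u \<eta> + b \<eta>) \<omega>"
proof -
  interpret H: finite_measure_subalgebra M H by unfold_locales (rule H)
  have [measurable]: "b \<in> borel_measurable M"
    by (rule measurable_from_subalg[OF H]) measurable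
  have "AE \<omega> in M. real_cond_exp M H (\<lambda>\<eta>. indicator A \<eta> * u \<eta> + indicator A \<eta> * b \<eta>) \<omega>
      = real_cond_exp M H (\<lambda>\<eta>. indicator A \<eta> * u \<eta>) \<omega> + real_cond_exp M H (\<lambda>\<eta>. indicator A \<eta> * b \<eta>) \<omega>"
    by (rule H.real_cond_exp_add) (auto intro: integrable_mult_indicator[OF _ u, simplified] integrable_mult_indicator[OF _ b, simplified])
  moreover have "AE \<omega> in M. real_cond_exp M H (\<lambda>\<eta>. b \<eta> * indicator A \<eta>) \<omega> = b \<omega> * real_cond_exp M H (indicator A) \<omega>"
    by (rule H.real_cond_exp_mult) (use integrable_mult_indicator[OF _ b] in \<open>auto simp: mult.commute\<close>)
  moreover have "AE \<omega> in M. real_cond_exp M H (\<lambda>\<eta>. u \<eta> + b \<eta>) \<omega> = real_cond_exp M H u \<omega> + real_cond_exp M H b \<omega>"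
    by (rule H.real_cond_exp_add[OF u b])
  moreover have "AE \<omega> in M. real_cond_exp M H b \<omega> = b \<omega>"
    by (rule H.real_cond_exp_F_meas[OF b]) measurable
  ultimately show ?thesis
    using eq by eventually_elim (simp add: distrib_left mult.commute)
qed

lemma cond_indep_given_nested_subalg:
  assumes H: "subalgebra M H" and F: "subalgebra H F"
    and indep: "cond_indep_given M A B H" and A: "sets A \<subseteq> sets M" and B: "sets B \<subseteq> sets M"
    and meas: "\<And>S. S \<in> sets A \<Longrightarrow> \<exists>q \<in> borel_measurable F. AE \<omega> in M. real_cond_exp M H (indicator S) \<omega> = q \<omega>"
  shows "cond_indep_given M A B F"
  unfolding cond_indep_given_def
proof (intro ballI)
  fix S T assume S: "S \<in> sets A" and T: "T \<in> sets B"
  obtain q where q: "q \<in> borel_measurable F"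
    and q_eq: "AE \<omega> in M. real_cond_exp M H (indicator S) \<omega> = q \<omega>"
    using meas[OF S] by blast
  have int: "integrable M (indicator S :: 'a \<Rightarrow> real)" "integrable M (indicator T :: 'a \<Rightarrow> real)"
    "integrable M (indicator (S \<inter> T) :: 'a \<Rightarrow> real)"
    using S T A B by (auto intro!: integrable_indicator_real)
  have "AE \<omega> in M. real_cond_exp M H (indicator (S \<inter> T)) \<omega> = q \<omega> * real_cond_exp M H (indicator T) \<omega>"
  proof -
    have "AE \<omega> in M. real_cond_exp M H (indicator (S \<inter> T)) \<omega>
        = real_cond_exp M H (indicator S) \<omega> * real_cond_exp M H (indicator T) \<omega>"
      using indep S T unfolding cond_indep_given_def by blast
    with q_eq show ?thesis
      by eventually_elim simp
  qed
  from real_cond_exp_mult_nested_subalg[OF H F q int(3,2) this]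
    real_cond_exp_nested_subalg_eq[OF H F q int(1) q_eq]
  show "AE \<omega> in M. real_cond_exp M F (indicator (S \<inter> T)) \<omega>
      = real_cond_exp M F (indicator S) \<omega> * real_cond_exp M F (indicator T) \<omega>"
    by eventually_elim simp
qed

end

section \<open>Ignorable treatment assignment\<close>

locale ignorable_assignment = prob_space M
  for M :: "'a measure" +
  fixes G :: nat and X :: "'x measure" and x :: "'a \<Rightarrow> 'x"
    and Z r :: "nat \<Rightarrow> 'a \<Rightarrow> real" and \<beta> :: "'x \<Rightarrow> 'w \<Rightarrow> real" and wg :: "nat \<Rightarrow> 'w"
    and e :: "nat \<Rightarrow> 'x \<Rightarrow> real" and Y :: "'y measure" and f :: "'x \<Rightarrow> 'y"
  assumes x_meas [measurable]: "x \<in> measurable M X"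
    and Z_meas [measurable]: "\<And>g. g \<in> {1..G} \<Longrightarrow> Z g \<in> borel_measurable M"
    and Z_01: "\<And>g \<omega>. g \<in> {1..G} \<Longrightarrow> \<omega> \<in> space M \<Longrightarrow> Z g \<omega> \<in> {0, 1}"
    and Z_sum: "\<And>\<omega>. \<omega> \<in> space M \<Longrightarrow> (\<Sum>g\<in>{1..G}. Z g \<omega>) = 1"
    and r_int: "\<And>g. g \<in> {1..G} \<Longrightarrow> integrable M (r g)"
    and \<beta>_meas [measurable]: "\<And>g. g \<in> {1..G} \<Longrightarrow> (\<lambda>\<xi>. \<beta> \<xi> (wg g)) \<in> borel_measurable X"
    and \<beta>_int: "\<And>g. g \<in> {1..G} \<Longrightarrow> integrable M (\<lambda>\<omega>. \<beta> (x \<omega>) (wg g))"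
    and ignorable: "ignorable_alias M G X x Z r \<beta> wg"
    and e_meas [measurable]: "\<And>g. g \<in> {1..G} \<Longrightarrow> e g \<in> borel_measurable X"
    and e_def: "\<And>g. g \<in> {1..G} \<Longrightarrow> AE \<omega> in M.
                  e g (x \<omega>) = cond_prob M (vimage_algebra (space M) x X) {\<eta>\<in>space M. Z g \<eta> = 1} \<omega>"
    and f_meas [measurable]: "f \<in> measurable X Y"
begin

definition covariate_algebra :: "'a measure" where
  "covariate_algebra = vimage_algebra (space M) x X"

definition propensity_algebra :: "'a measure" where
  "propensity_algebra = vimage_algebra (space M) (\<lambda>\<omega>. (restrict (\<lambda>g. e g (x \<omega>)) {1..G}, f (x \<omega>)))
                                 (PiM {1..G} (\<lambda>_. borel) \<Otimes>\<^sub>M Y)"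

abbreviation assigned :: "nat \<Rightarrow> 'a set" where
  "assigned g \<equiv> {\<eta>\<in>space M. Z g \<eta> = 1}"

abbreviation adjusted_response :: "nat \<Rightarrow> 'a \<Rightarrow> real" where
  "adjusted_response g \<omega> \<equiv> r g \<omega> - \<beta> (x \<omega>) (wg g)"

abbreviation observed_response :: "'a \<Rightarrow> real" where
  "observed_response \<eta> \<equiv> \<Sum>k\<in>{1..G}. Z k \<eta> * r k \<eta>"

lemma subalgebra_covariate_algebra: "subalgebra M covariate_algebra"
  unfolding covariate_algebra_def by (rule subalgebra_vimage_algebra) measurable

lemma subalgebra_propensity_algebra: "subalgebra covariate_algebra propensity_algebra"
  unfolding covariate_algebra_def propensity_algebra_def
proof (rule subalgebra_vimage_algebra_comp)
  show "x \<in> space M \<rightarrow> space X"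
    using measurable_space[OF x_meas] by blast
qed measurable

lemma propensity_measurable [measurable]:
  assumes "g \<in> {1..G}"
  shows "(\<lambda>\<omega>. e g (x \<omega>)) \<in> borel_measurable propensity_algebra"
proof -
  have "(\<lambda>\<omega>. (restrict (\<lambda>g. e g (x \<omega>)) {1..G}, f (x \<omega>)))
      \<in> measurable propensity_algebra (PiM {1..G} (\<lambda>_. borel) \<Otimes>\<^sub>M Y)"
    unfolding propensity_algebra_def
    using measurable_space[OF x_meas] measurable_space[OF f_meas]
    by (intro measurable_vimage_algebra1) (auto simp: space_pair_measure space_PiM)
  then have "(\<lambda>\<omega>. fst (restrict (\<lambda>g. e g (x \<omega>)) {1..G}, f (x \<omega>)) g) \<in> borel_measurable propensity_algebra"
    using assms by measurable
  then show ?thesis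
    using assms by simp
qed

lemma sets_assigned [measurable]: "g \<in> {1..G} \<Longrightarrow> assigned g \<in> sets M"
  by measurable

lemma r_measurable [measurable]: "g \<in> {1..G} \<Longrightarrow> r g \<in> borel_measurable M"
  using r_int by blast

lemma assigned_in_gen_vec: "g \<in> {1..G} \<Longrightarrow> assigned g \<in> sets (gen_vec M G Z)"
proof -
  assume g: "g \<in> {1..G}"
  have "(\<lambda>\<omega>. restrict (\<lambda>k. Z k \<omega>) {1..G}) -` {v \<in> space (PiM {1..G} (\<lambda>_. borel)). v g = 1} \<inter> space M
      \<in> sets (gen_vec M G Z)"
    unfolding gen_vec_def by (rule in_vimage_algebra) (use g in measurable)
  also have "(\<lambda>\<omega>. restrict (\<lambda>k. Z k \<omega>) {1..G}) -` {v \<in> space (PiM {1..G} (\<lambda>_. borel)). v g = 1} \<inter> space M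
      = assigned g"
    using g by (auto simp: space_PiM)
  finally show ?thesis .
qed

lemma observed_response_assigned:
  assumes "g \<in> {1..G}" "\<eta> \<in> space M" "Z g \<eta> = 1"
  shows "observed_response \<eta> = r g \<eta>"
proof -
  obtain g0 where "\<forall>k\<in>{1..G}. Z k \<eta> = (if k = g0 then 1 else 0)"
    using one_hot_eq_delta[of "{1..G}" "\<lambda>k. Z k \<eta>"] Z_01 Z_sum assms(2) by auto
  moreover from this assms have "g0 = g"
    by (metis zero_neq_one)
  ultimately have "Z k \<eta> = (if k = g then 1 else 0)" if "k \<in> {1..G}" for k
    using that by blast
  then have "observed_response \<eta> = (\<Sum>k\<in>{1..G}. if k = g then r g \<eta> else 0)"
    by (intro sum.cong) auto
  then show ?thesis
    using assms(1) by simp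
qed

lemma x_measurable_covariate [measurable]: "x \<in> measurable covariate_algebra X"
  unfolding covariate_algebra_def
  using measurable_space[OF x_meas] by (intro measurable_vimage_algebra1) blast

lemma cond_prob_assigned_covariate:
  assumes "g \<in> {1..G}"
  shows "AE \<omega> in M. real_cond_exp M covariate_algebra (indicator (assigned g)) \<omega> = e g (x \<omega>)"
  using e_def[OF assms] by (auto simp: cond_prob_def covariate_algebra_def)

lemma cond_prob_assigned_propensity:
  assumes "g \<in> {1..G}"
  shows "AE \<omega> in M. cond_prob M propensity_algebra (assigned g) \<omega> = e g (x \<omega>)"
  unfolding cond_prob_def using assms
  by (intro real_cond_exp_nested_subalg_eq[OF subalgebra_covariate_algebra subalgebra_propensity_algebra]
      cond_prob_assigned_covariate integrable_indicator_real) measurable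

lemma cond_prob_assignment_event:
  assumes "S \<in> sets (gen_vec M G Z)"
  shows "\<exists>q \<in> borel_measurable propensity_algebra.
    AE \<omega> in M. real_cond_exp M covariate_algebra (indicator S) \<omega> = q \<omega>"
proof -
  interpret C: finite_measure_subalgebra M covariate_algebra
    by unfold_locales (rule subalgebra_covariate_algebra)
  obtain J where J: "J \<subseteq> {1..G}"
    and S_sum: "\<And>\<omega>. \<omega> \<in> space M \<Longrightarrow> indicator S \<omega> = (\<Sum>g\<in>J. indicator (assigned g) \<omega> :: real)"
    using indicator_gen_vec_one_hot[OF Z_01 Z_sum assms] by blast
  \<comment> \<open>padded with empty sets because \<open>real_cond_exp_sum\<close> needs every member of the family to be integrable\<close>
  define A where "A g = (if g \<in> {1..G} then assigned g else {})" for g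
  have [measurable]: "A g \<in> sets M" for g
    by (simp add: A_def)
  have [measurable]: "S \<in> sets M"
    using assms sets_gen_vec_subset[of G Z M] by auto
  have "AE \<omega> in M. real_cond_exp M covariate_algebra (indicator S) \<omega>
      = real_cond_exp M covariate_algebra (\<lambda>\<omega>. \<Sum>g\<in>J. indicator (A g) \<omega>) \<omega>"
    using J by (intro C.real_cond_exp_cong AE_I2) (auto simp: S_sum A_def intro!: sum.cong)
  moreover have "AE \<omega> in M. real_cond_exp M covariate_algebra (\<lambda>\<omega>. \<Sum>g\<in>J. indicator (A g) \<omega>) \<omega>
      = (\<Sum>g\<in>J. real_cond_exp M covariate_algebra (indicator (A g)) \<omega>)"
    by (intro C.real_cond_exp_sum integrable_indicator_real) measurable
  moreover have "AE \<omega> in M. \<forall>g\<in>J. real_cond_exp M covariate_algebra (indicator (A g)) \<omega> = e g (x \<omega>)"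
    using J finite_subset[OF J]
    by (intro AE_finite_allI) (auto simp: A_def subset_iff intro: cond_prob_assigned_covariate)
  ultimately have "AE \<omega> in M. real_cond_exp M covariate_algebra (indicator S) \<omega> = (\<Sum>g\<in>J. e g (x \<omega>))"
    by eventually_elim simp
  moreover have "(\<lambda>\<omega>. \<Sum>g\<in>J. e g (x \<omega>)) \<in> borel_measurable propensity_algebra"
    using J by (intro borel_measurable_sum propensity_measurable) auto
  ultimately show ?thesis
    by (rule bexI)
qed

theorem cond_indep_propensity:
  "cond_indep_given M (gen_vec M G Z) (gen_vec M G adjusted_response) propensity_algebra"
proof (rule cond_indep_given_nested_subalg[OF subalgebra_covariate_algebra subalgebra_propensity_algebra])
  show "cond_indep_given M (gen_vec M G Z) (gen_vec M G adjusted_response) covariate_algebra"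
    using ignorable by (simp add: ignorable_alias_def covariate_algebra_def)
  show "sets (gen_vec M G Z) \<subseteq> sets M" "sets (gen_vec M G adjusted_response) \<subseteq> sets M"
    using r_int by (auto intro!: sets_gen_vec_subset)
qed (rule cond_prob_assignment_event)

theorem cond_prob_propensity_bounds:
  assumes "g \<in> {1..G}"
  shows "AE \<omega> in M. 0 < cond_prob M propensity_algebra (assigned g) \<omega>
    \<and> cond_prob M propensity_algebra (assigned g) \<omega> < 1"
proof -
  have "AE \<omega> in M. 0 < cond_prob M covariate_algebra (assigned g) \<omega>
      \<and> cond_prob M covariate_algebra (assigned g) \<omega> < 1"
    using ignorable assms by (simp add: ignorable_alias_def covariate_algebra_def)
  with cond_prob_assigned_propensity[OF assms] cond_prob_assigned_covariate[OF assms] show ?thesis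
    unfolding cond_prob_def by eventually_elim simp
qed

lemma cond_exp_assigned_response_covariate:
  assumes g: "g \<in> {1..G}"
  shows "AE \<omega> in M. real_cond_exp M covariate_algebra (\<lambda>\<eta>. indicator (assigned g) \<eta> * r g \<eta>) \<omega>
    = e g (x \<omega>) * real_cond_exp M covariate_algebra (r g) \<omega>"
proof -
  define V where "V \<omega> = restrict (\<lambda>k. adjusted_response k \<omega>) {1..G}" for \<omega>
  define b where "b \<omega> = \<beta> (x \<omega>) (wg g)" for \<omega>
  have [measurable]: "V \<in> measurable M (PiM {1..G} (\<lambda>_. borel))" "b \<in> borel_measurable covariate_algebra"
    unfolding V_def b_def using g by measurable
  have r_eq: "r g = (\<lambda>\<eta>. V \<eta> g + b \<eta>)"
    using g by (simp add: V_def b_def)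
  have int_adjusted: "integrable M (\<lambda>\<eta>. V \<eta> g)"
    using r_int[OF g] \<beta>_int[OF g] g by (simp add: V_def)
  have "AE \<omega> in M. real_cond_exp M covariate_algebra (\<lambda>\<eta>. indicator (assigned g) \<eta> * V \<eta> g) \<omega>
      = real_cond_exp M covariate_algebra (indicator (assigned g)) \<omega>
        * real_cond_exp M covariate_algebra (\<lambda>\<eta>. V \<eta> g) \<omega>"
  proof (rule real_cond_exp_indicator_mult_comp[where \<Phi> = V and \<psi> = "\<lambda>v. v g"])
    fix T assume "T \<in> sets (PiM {1..G} (\<lambda>_. borel :: real measure))"
    then have "V -` T \<inter> space M \<in> sets (gen_vec M G adjusted_response)"
      unfolding gen_vec_def V_def by (rule in_vimage_algebra)
    then show "AE \<omega> in M. real_cond_exp M covariate_algebra (indicator (assigned g \<inter> (V -` T \<inter> space M))) \<omega>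
        = real_cond_exp M covariate_algebra (indicator (assigned g)) \<omega>
          * real_cond_exp M covariate_algebra (indicator (V -` T \<inter> space M)) \<omega>"
      using ignorable assigned_in_gen_vec[OF g]
      by (simp add: ignorable_alias_def cond_indep_given_def covariate_algebra_def)
  qed (use g int_adjusted subalgebra_covariate_algebra in measurable)
  then have "AE \<omega> in M. real_cond_exp M covariate_algebra (\<lambda>\<eta>. indicator (assigned g) \<eta> * (V \<eta> g + b \<eta>)) \<omega>
      = real_cond_exp M covariate_algebra (indicator (assigned g)) \<omega>
        * real_cond_exp M covariate_algebra (\<lambda>\<eta>. V \<eta> g + b \<eta>) \<omega>"
    using g \<beta>_int[OF g]
    by (intro real_cond_exp_indicator_mult_add_measurable[OF subalgebra_covariate_algebra _ int_adjusted])
      (auto simp: b_def)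
  with cond_prob_assigned_covariate[OF g] show ?thesis
    unfolding r_eq by eventually_elim simp
qed

lemma cond_exp_assigned_observed_response:
  assumes g: "g \<in> {1..G}"
  shows "AE \<omega> in M. cond_exp_event M propensity_algebra (assigned g) observed_response \<omega>
    = real_cond_exp M propensity_algebra (r g) \<omega>"
proof -
  interpret P: finite_measure_subalgebra M propensity_algebra
    using subalgebra_covariate_algebra subalgebra_propensity_algebra
    by unfold_locales (auto simp: subalgebra_def)
  have int: "integrable M (\<lambda>\<eta>. indicator (assigned g) \<eta> * r g \<eta>)"
    using integrable_mult_indicator[OF sets_assigned[OF g] r_int[OF g]] by simp
  have "AE \<omega> in M. real_cond_exp M propensity_algebra (\<lambda>\<eta>. indicator (assigned g) \<eta> * observed_response \<eta>) \<omega>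
      = real_cond_exp M propensity_algebra (\<lambda>\<eta>. indicator (assigned g) \<eta> * r g \<eta>) \<omega>"
  proof (rule P.real_cond_exp_cong)
    show "AE \<eta> in M. indicator (assigned g) \<eta> * observed_response \<eta> = indicator (assigned g) \<eta> * r g \<eta>"
      using observed_response_assigned[OF g] by (intro AE_I2) (simp add: indicator_def)
  qed (use g in measurable)
  moreover have "AE \<omega> in M. real_cond_exp M propensity_algebra (\<lambda>\<eta>. indicator (assigned g) \<eta> * r g \<eta>) \<omega>
      = e g (x \<omega>) * real_cond_exp M propensity_algebra (r g) \<omega>"
    by (rule real_cond_exp_mult_nested_subalg[OF subalgebra_covariate_algebra subalgebra_propensity_algebra
          propensity_measurable[OF g] int r_int[OF g] cond_exp_assigned_response_covariate[OF g]])
  moreover note cond_prob_assigned_propensity[OF g] cond_prob_propensity_bounds[OF g]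
  ultimately show ?thesis
    unfolding cond_exp_event_def by eventually_elim simp
qed

theorem cond_exp_contrast:
  "AE \<omega> in M. real_cond_exp M propensity_algebra (\<lambda>\<eta>. \<Sum>g\<in>{1..G}. h g * r g \<eta>) \<omega>
    = (\<Sum>g\<in>{1..G}. h g * cond_exp_event M propensity_algebra (assigned g) observed_response \<omega>)"
proof -
  interpret P: finite_measure_subalgebra M propensity_algebra
    using subalgebra_covariate_algebra subalgebra_propensity_algebra
    by unfold_locales (auto simp: subalgebra_def)
  define c where "c = (\<lambda>g \<eta>. if g \<in> {1..G} then h g * r g \<eta> else 0)"
  have "AE \<omega> in M. real_cond_exp M propensity_algebra (\<lambda>\<eta>. \<Sum>g\<in>{1..G}. c g \<eta>) \<omega>
      = (\<Sum>g\<in>{1..G}. real_cond_exp M propensity_algebra (c g) \<omega>)"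
  proof (rule P.real_cond_exp_sum)
    show "integrable M (c g)" for g
      by (cases "g \<in> {1..G}") (auto simp: c_def r_int)
  qed
  moreover have "AE \<omega> in M. \<forall>g\<in>{1..G}. real_cond_exp M propensity_algebra (c g) \<omega>
      = h g * cond_exp_event M propensity_algebra (assigned g) observed_response \<omega>"
  proof (rule AE_finite_allI)
    fix g assume g: "g \<in> {1..G}"
    then have c_g: "c g = (\<lambda>\<eta>. h g * r g \<eta>)"
      by (simp add: c_def)
    show "AE \<omega> in M. real_cond_exp M propensity_algebra (c g) \<omega>
        = h g * cond_exp_event M propensity_algebra (assigned g) observed_response \<omega>"
      using P.real_cond_exp_cmult[OF r_int[OF g], of "h g"] cond_exp_assigned_observed_response[OF g]
      unfolding c_g by eventually_elim simp
  qed simp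
  ultimately show ?thesis
    by eventually_elim (simp add: c_def)
qed

end

theorem proposition3:
  fixes M :: "'a measure" and G :: nat
    and X :: "'x measure" and x :: "'a \<Rightarrow> 'x"
    and W :: "'w measure" and w :: "'a \<Rightarrow> 'w" and wg :: "nat \<Rightarrow> 'w"
    and Z :: "nat \<Rightarrow> 'a \<Rightarrow> real" and r :: "nat \<Rightarrow> 'a \<Rightarrow> real"
    and \<beta> :: "'x \<Rightarrow> 'w \<Rightarrow> real"
    and e :: "nat \<Rightarrow> 'x \<Rightarrow> real"
    and Y :: "'y measure" and f :: "'x \<Rightarrow> 'y"
  assumes prob: "prob_space M"
    and x_meas: "x \<in> measurable M X"
    and w_meas: "w \<in> measurable M W"
    and wg_distinct: "inj_on wg {1..G}"
    and Z_meas: "\<And>g. g \<in> {1..G} \<Longrightarrow> Z g \<in> borel_measurable M"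
    and Z_01: "\<And>g \<omega>. g \<in> {1..G} \<Longrightarrow> \<omega> \<in> space M \<Longrightarrow> Z g \<omega> \<in> {0, 1}"
    and Z_sum: "\<And>\<omega>. \<omega> \<in> space M \<Longrightarrow> (\<Sum>g\<in>{1..G}. Z g \<omega>) = 1"
    and eligibility: "\<And>g \<omega>. g \<in> {1..G} \<Longrightarrow> \<omega> \<in> space M \<Longrightarrow> (Z g \<omega> = 1 \<longleftrightarrow> w \<omega> = wg g)"
    and r_int: "\<And>g. g \<in> {1..G} \<Longrightarrow> integrable M (r g)"
    and \<beta>_meas: "\<And>g. g \<in> {1..G} \<Longrightarrow> (\<lambda>\<xi>. \<beta> \<xi> (wg g)) \<in> borel_measurable X"
    and \<beta>_int: "\<And>g. g \<in> {1..G} \<Longrightarrow> integrable M (\<lambda>\<omega>. \<beta> (x \<omega>) (wg g))"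
    and ignorable: "ignorable_alias M G X x Z r \<beta> wg"
    and e_meas: "\<And>g. g \<in> {1..G} \<Longrightarrow> e g \<in> borel_measurable X"
    and e_def: "\<And>g. g \<in> {1..G} \<Longrightarrow> AE \<omega> in M.
                  e g (x \<omega>) = cond_prob M (vimage_algebra (space M) x X) {\<eta>\<in>space M. Z g \<eta> = 1} \<omega>"
    and f_meas: "f \<in> measurable X Y"
  defines "F \<equiv> vimage_algebra (space M) (\<lambda>\<omega>. (restrict (\<lambda>g. e g (x \<omega>)) {1..G}, f (x \<omega>)))
                                 (PiM {1..G} (\<lambda>_. borel) \<Otimes>\<^sub>M Y)"
  shows "cond_indep_given M (gen_vec M G Z) (gen_vec M G (\<lambda>g \<omega>. r g \<omega> - \<beta> (x \<omega>) (wg g))) F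
    \<and> (\<forall>g\<in>{1..G}. (AE \<omega> in M.
           0 < cond_prob M F {\<eta>\<in>space M. Z g \<eta> = 1} \<omega> \<and> cond_prob M F {\<eta>\<in>space M. Z g \<eta> = 1} \<omega> < 1))
    \<and> (\<forall>h :: nat \<Rightarrow> real. (\<Sum>g\<in>{1..G}. h g) = 0 \<longrightarrow> (\<exists>g\<in>{1..G}. h g \<noteq> 0) \<longrightarrow>
           not_aliased G X h \<beta> wg \<longrightarrow>
           (AE \<omega> in M. real_cond_exp M F (\<lambda>\<eta>. \<Sum>g\<in>{1..G}. h g * r g \<eta>) \<omega>
             = (\<Sum>g\<in>{1..G}. h g * cond_exp_event M F {\<eta>\<in>space M. Z g \<eta> = 1}
                                     (\<lambda>\<eta>. \<Sum>k\<in>{1..G}. Z k \<eta> * r k \<eta>) \<omega>)))"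
proof -
  interpret ignorable_assignment M G X x Z r \<beta> wg e Y f
    by (intro ignorable_assignment.intro ignorable_assignment_axioms.intro prob)
      (use x_meas Z_meas Z_01 Z_sum r_int \<beta>_meas \<beta>_int ignorable e_meas e_def f_meas in auto)
  have "F = propensity_algebra"
    by (simp add: F_def propensity_algebra_def)
  then show ?thesis
    using cond_indep_propensity cond_prob_propensity_bounds cond_exp_contrast by auto
qed

end
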